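(* Let $d\ge 2$ and let $D\subset T_d$ be a domain with $|D|\ge 2$. Then $D$ is isoperimetrically optimal, i.e. $|\partial D|=I_d(|D|)$, if and only if $\tau(D)\le d-2$.
   Context: $T_d$ is the $d$-regular tree (connected, acyclic, every vertex of degree $d$). A domain is a finite nonempty connected set $D$ of vertices of $T_d$, identified with its induced subgraph. For $x\in D$, $\deg_D(x)$ is the number of neighbours of $x$ lying in $D$. The (inner vertex) boundary is $\partial D=\{x\in D:\deg_D(x)<d\}$. For $k\ge1$, $I_d(k)=\min\{|\partial D| : D\subset T_d \text{ a domain with } |D|=k\}$. For a domain with $|D|\ge 2$, the boundary branching excess is $\tau(D)=\sum_{x\in\partial D}(\deg_D(x)-1)$. *)

theory Defs
  imports Main
begin

text \<open>Concrete model of the d-regular tree T_d: vertices are lists of naturals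
  (words); the root is the empty list, it has children [i] for i < d, and every
  other vertex xs has children xs @ [i] for i < d - 1. Edges join a vertex to
  its children. For d \<ge> 2 every vertex has degree exactly d.\<close>

definition tree_vert :: "nat \<Rightarrow> nat list \<Rightarrow> bool" where
  "tree_vert d xs \<longleftrightarrow> (\<forall>i < length xs. xs ! i < (if i = 0 then d else d - 1))"

definition tree_adj :: "nat \<Rightarrow> nat list \<Rightarrow> nat list \<Rightarrow> bool" where
  "tree_adj d x y \<longleftrightarrow> tree_vert d x \<and> tree_vert d y \<and>
     ((\<exists>i. y = x @ [i]) \<or> (\<exists>i. x = y @ [i]))"

definition induced_connected :: "nat \<Rightarrow> nat list set \<Rightarrow> bool" where
  "induced_connected d D \<longleftrightarrow>
     (\<forall>x\<in>D. \<forall>y\<in>D. (x, y) \<in> {(u, v). u \<in> D \<and> v \<in> D \<and> tree_adj d u v}\<^sup>*)"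

definition domain :: "nat \<Rightarrow> nat list set \<Rightarrow> bool" where
  "domain d D \<longleftrightarrow> finite D \<and> D \<noteq> {} \<and> (\<forall>x\<in>D. tree_vert d x) \<and> induced_connected d D"

definition degD :: "nat \<Rightarrow> nat list set \<Rightarrow> nat list \<Rightarrow> nat" where
  "degD d D x = card {y \<in> D. tree_adj d x y}"

definition boundary :: "nat \<Rightarrow> nat list set \<Rightarrow> nat list set" where
  "boundary d D = {x \<in> D. degD d D x < d}"

definition isoI :: "nat \<Rightarrow> nat \<Rightarrow> nat" where
  "isoI d k = Min {card (boundary d D) | D. domain d D \<and> card D = k}"

definition tau :: "nat \<Rightarrow> nat list set \<Rightarrow> int" where
  "tau d D = (\<Sum>x\<in>boundary d D. int (degD d D x) - 1)"

end

(* Counting degrees in the tree D (they sum to 2|D| - 2, and interior vertices have degree d)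
   gives (d - 1) |bd D| = tau D + (d - 2) |D| + 2.  So among domains of one size, boundary sizes
   differ by the difference of tau divided by d - 1, and tau D >= 0 once |D| >= 2.  Growing a
   domain vertex by vertex, always attaching the new leaf to one boundary vertex until it is full,
   gives domains of every size whose boundary is all leaves but one vertex, so tau <= d - 2; hence
   optimal domains have tau <= d - 2.  Conversely, if tau D <= d - 2 then no domain of the same
   size can have a smaller boundary, as that would need a tau smaller by at least d - 1. *)

theory Submission
  imports Defs "HOL-Library.Sublist"
begin

abbreviation induced_edges :: "nat \<Rightarrow> nat list set \<Rightarrow> (nat list \<times> nat list) set" where
  "induced_edges d D \<equiv> {(u, v). u \<in> D \<and> v \<in> D \<and> tree_adj d u v}"

lemma tree_adj_sym: "tree_adj d x y \<Longrightarrow> tree_adj d y x"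
  unfolding tree_adj_def by blast

lemma tree_adj_irrefl: "\<not> tree_adj d x x"
  unfolding tree_adj_def by auto

lemma tree_vert_snoc:
  "tree_vert d (x @ [i]) \<longleftrightarrow> tree_vert d x \<and> i < (if x = [] then d else d - 1)"
  unfolding tree_vert_def by (auto simp: nth_append less_Suc_eq split: if_splits)

lemma tree_vert_butlast: "tree_vert d x \<Longrightarrow> tree_vert d (butlast x)"
  unfolding tree_vert_def by (auto simp: nth_butlast)

lemma tree_vert_single: "tree_vert d [i] \<longleftrightarrow> i < d"
  using tree_vert_snoc[of d "[]" i] by (simp add: tree_vert_def)

lemma tree_neighbours:
  assumes "tree_vert d x"
  shows "{y. tree_adj d x y} =
    (\<lambda>i. x @ [i]) ` {..<(if x = [] then d else d - 1)} \<union> (if x = [] then {} else {butlast x})"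
proof -
  have "tree_adj d x (butlast x)" if "x \<noteq> []"
    using that assms tree_vert_butlast[OF assms] append_butlast_last_id[OF that, symmetric]
    unfolding tree_adj_def by blast
  then show ?thesis
    using assms unfolding tree_adj_def by (auto simp: tree_vert_snoc tree_vert_single)
qed

lemma card_tree_neighbours:
  assumes "tree_vert d x"
  shows "finite {y. tree_adj d x y}" and "card {y. tree_adj d x y} = d"
proof -
  have card_children: "card ((\<lambda>i. x @ [i]) ` {..<c}) = c" for c
    by (simp add: card_image inj_on_def)
  show "finite {y. tree_adj d x y}"
    unfolding tree_neighbours[OF assms] by auto
  show "card {y. tree_adj d x y} = d"
  proof (cases "x = []")
    case True
    then show ?thesis unfolding tree_neighbours[OF assms] using card_children by simp
  next
    case False
    then have "d \<ge> 1" using assms unfolding tree_vert_def by fastforce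
    moreover have "butlast x \<notin> (\<lambda>i. x @ [i]) ` {..<d - 1}"
      using False by (auto dest: arg_cong[of _ _ length])
    ultimately show ?thesis
      unfolding tree_neighbours[OF assms] using card_children False by simp
  qed
qed

lemma degD_le: "tree_vert d x \<Longrightarrow> degD d D x \<le> d"
  unfolding degD_def using card_tree_neighbours by (metis (no_types, lifting) card_mono mem_Collect_eq subsetI)

lemma degD_insert:
  assumes "finite D" "y \<notin> D"
  shows "degD d (insert y D) x = degD d D x + (if tree_adj d x y then 1 else 0)"
proof -
  have "{z \<in> insert y D. tree_adj d x z} =
      (if tree_adj d x y then insert y {z \<in> D. tree_adj d x z} else {z \<in> D. tree_adj d x z})"
    by auto
  then show ?thesis unfolding degD_def using assms by simp
qed

lemma domain_finite: "domain d D \<Longrightarrow> finite D"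
  and domain_tree_vert: "domain d D \<Longrightarrow> x \<in> D \<Longrightarrow> tree_vert d x"
  and domain_connected: "domain d D \<Longrightarrow> x \<in> D \<Longrightarrow> y \<in> D \<Longrightarrow> (x, y) \<in> (induced_edges d D)\<^sup>*"
  unfolding domain_def induced_connected_def by blast+

definition parent_in :: "nat list set \<Rightarrow> nat list \<Rightarrow> bool" where
  "parent_in D x \<longleftrightarrow> x \<noteq> [] \<and> butlast x \<in> D"

lemma induced_path_keeps_prefix:
  assumes "(z, w) \<in> (induced_edges d D)\<^sup>*" "prefix p z" "\<not> parent_in D p"
  shows "prefix p w"
  using assms(1,2)
proof (induction rule: rtrancl_induct)
  case base
  then show ?case .
next
  case (step u v)
  from step.hyps(2) have "v \<in> D" and "(\<exists>i. v = u @ [i]) \<or> (\<exists>i. u = v @ [i])"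
    by (auto simp: tree_adj_def)
  then show ?case
  proof (elim disjE exE)
    fix i assume "v = u @ [i]"
    with step.IH step.prems show ?case by simp
  next
    fix i assume "u = v @ [i]"
    with step.IH step.prems have "p = v @ [i] \<or> prefix p v" by simp
    with \<open>v \<in> D\<close> assms(3) show ?case by (auto simp: parent_in_def)
  qed
qed

text \<open>A vertex of D whose parent lies outside D is a top of D: no path inside D crosses the edge
  above it, so all of D lies in the subtree below it.\<close>

lemma domain_top_prefix:
  assumes "domain d D" "t \<in> D" "\<not> parent_in D t" "z \<in> D"
  shows "prefix t z"
  using induced_path_keeps_prefix[OF domain_connected[OF assms(1,2,4)] _ assms(3)] by simp

lemma domain_top_unique:
  assumes "domain d D" "t \<in> D" "\<not> parent_in D t" "t' \<in> D" "\<not> parent_in D t'"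
  shows "t = t'"
  using domain_top_prefix[OF assms(1-4)] domain_top_prefix[OF assms(1,4,5,2)]
  by (rule prefix_order.antisym)

lemma domain_top_exists:
  assumes "domain d D"
  obtains t where "t \<in> D" "\<not> parent_in D t"
proof -
  have fin: "finite (length ` D)" "length ` D \<noteq> {}"
    using assms unfolding domain_def by auto
  obtain t where t: "t \<in> D" "length t = Min (length ` D)"
    using Min_in[OF fin] by auto
  have shortest: "length t \<le> length x" if "x \<in> D" for x
    using Min_le[OF fin(1)] that t(2) by simp
  have "\<not> parent_in D t"
  proof
    assume "parent_in D t"
    then have "t \<noteq> []" "butlast t \<in> D" by (auto simp: parent_in_def)
    moreover from \<open>t \<noteq> []\<close> have "length (butlast t) < length t"
      by (simp add: diff_less)
    ultimately show False using shortest[of "butlast t"] leD by blast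
  qed
  with t(1) show thesis by (rule that)
qed

lemma card_parent_in:
  assumes "domain d D"
  shows "card {x \<in> D. parent_in D x} + 1 = card D"
proof -
  obtain t where t: "t \<in> D" "\<not> parent_in D t"
    using domain_top_exists[OF assms] .
  have "D = insert t {x \<in> D. parent_in D x}"
    using domain_top_unique[OF assms _ _ t] t by blast
  moreover have "finite {x \<in> D. parent_in D x}"
    using domain_finite[OF assms] by simp
  ultimately show ?thesis
    using t(2) by (metis (no_types, lifting) Suc_eq_plus1 card_insert_disjoint mem_Collect_eq)
qed

lemma degD_domain:
  assumes "domain d D" "x \<in> D"
  shows "degD d D x = card {y \<in> D. \<exists>i. y = x @ [i]} + (if parent_in D x then 1 else 0)"
proof -
  let ?C = "{y \<in> D. \<exists>i. y = x @ [i]}"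
  have "{y \<in> D. tree_adj d x y} = (if parent_in D x then insert (butlast x) ?C else ?C)"
    using domain_tree_vert[OF assms(1)] assms(2) unfolding tree_adj_def parent_in_def
    by auto (metis append_butlast_last_id)
  moreover have "butlast x \<notin> ?C"
    by (auto dest: arg_cong[of _ _ length])
  moreover have "finite ?C" using domain_finite[OF assms(1)] by simp
  ultimately show ?thesis
    unfolding degD_def by simp
qed

lemma sum_degD_domain:
  assumes "domain d D"
  shows "(\<Sum>x\<in>D. degD d D x) + 2 = 2 * card D"
proof -
  have fin: "finite D" using domain_finite[OF assms] .
  have "(\<Sum>x\<in>D. card {y \<in> D. \<exists>i. y = x @ [i]}) = card (\<Union>x\<in>D. {y \<in> D. \<exists>i. y = x @ [i]})"
    using fin by (intro card_UN_disjoint[symmetric]) auto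
  also have "(\<Union>x\<in>D. {y \<in> D. \<exists>i. y = x @ [i]}) = {x \<in> D. parent_in D x}"
  proof (intro set_eqI iffI)
    fix y assume "y \<in> {x \<in> D. parent_in D x}"
    then have "y \<in> D" "butlast y \<in> D" "y = butlast y @ [last y]"
      by (auto simp: parent_in_def)
    then show "y \<in> (\<Union>x\<in>D. {y \<in> D. \<exists>i. y = x @ [i]})" by blast
  qed (auto simp: parent_in_def)
  finally have "(\<Sum>x\<in>D. degD d D x) = 2 * card {x \<in> D. parent_in D x}"
    using fin by (simp add: degD_domain[OF assms] sum.distrib sum.If_cases Int_def)
  then show ?thesis using card_parent_in[OF assms] by simp
qed

lemma boundary_card_identity:
  assumes "domain d D"
  shows "(int d - 1) * int (card (boundary d D)) = tau d D + (int d - 2) * int (card D) + 2"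
proof -
  let ?B = "boundary d D"
  have fin: "finite D" using domain_finite[OF assms] .
  have sub: "?B \<subseteq> D" unfolding boundary_def by auto
  have interior: "degD d D x = d" if "x \<in> D - ?B" for x
    using degD_le[OF domain_tree_vert[OF assms], of x D] that unfolding boundary_def by simp
  have "2 * int (card D) - 2 = (\<Sum>x\<in>D. int (degD d D x))"
    using sum_degD_domain[OF assms] by (simp flip: of_nat_sum)
  also have "\<dots> = (\<Sum>x\<in>?B. int (degD d D x)) + (\<Sum>x\<in>D - ?B. int (degD d D x))"
    using sum.subset_diff[OF sub fin] by (simp add: add.commute)
  also have "(\<Sum>x\<in>?B. int (degD d D x)) = tau d D + int (card ?B)"
    unfolding tau_def by (simp add: sum_subtractf)
  also have "(\<Sum>x\<in>D - ?B. int (degD d D x)) = int d * (int (card D) - int (card ?B))"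
    using interior card_Diff_subset[OF finite_subset[OF sub fin] sub] card_mono[OF fin sub]
    by (simp add: of_nat_diff)
  finally show ?thesis by (simp add: algebra_simps)
qed

lemma degD_pos:
  assumes "domain d D" "card D \<ge> 2" "x \<in> D"
  shows "degD d D x > 0"
proof -
  have "D \<noteq> {x}" using assms(2) by auto
  then obtain y where "y \<in> D" "y \<noteq> x" using assms(3) by blast
  then obtain z where "(x, z) \<in> induced_edges d D"
    using domain_connected[OF assms(1,3)] by (auto elim: converse_rtranclE)
  then have "z \<in> {y \<in> D. tree_adj d x y}" by simp
  moreover have "finite {y \<in> D. tree_adj d x y}" using domain_finite[OF assms(1)] by simp
  ultimately show ?thesis unfolding degD_def by (auto simp: card_gt_0_iff)
qed

lemma tau_nonneg:
  assumes "domain d D" "card D \<ge> 2"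
  shows "tau d D \<ge> 0"
  unfolding tau_def using degD_pos[OF assms] unfolding boundary_def
  by (intro sum_nonneg) (simp add: Suc_le_eq)

lemma domain_unique_neighbour:
  assumes "domain d D" "y \<notin> D" "a \<in> D" "x \<in> D" "tree_adj d a y" "tree_adj d x y"
  shows "x = a"
proof -
  have nbr: "(z = butlast y \<and> length z < length y) \<or> (\<not> parent_in D z \<and> length y < length z)"
    if "tree_adj d z y" for z
    using that assms(2) unfolding tree_adj_def parent_in_def by auto
  have below_top: False
    if "\<not> parent_in D t" "t \<in> D" "length y < length t" "z \<in> D" "length z < length y" for t z
    using prefix_length_le[OF domain_top_prefix[OF assms(1) that(2,1,4)]] that(3,5) by simp
  show ?thesis
    using nbr[OF assms(5)] nbr[OF assms(6)]
  proof (elim disjE conjE)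
    assume "\<not> parent_in D a" "\<not> parent_in D x"
    then show "x = a" using domain_top_unique[OF assms(1,4) _ assms(3)] by blast
  qed (use below_top assms(3,4) in blast)+
qed

lemma domain_insert_neighbour:
  assumes "domain d D" "a \<in> D" "tree_adj d a y"
  shows "domain d (insert y D)"
proof -
  let ?E = "induced_edges d (insert y D)"
  have mono: "(induced_edges d D)\<^sup>* \<subseteq> ?E\<^sup>*" by (rule rtrancl_mono) auto
  have "(u, a) \<in> ?E\<^sup>* \<and> (a, u) \<in> ?E\<^sup>*" if "u \<in> insert y D" for u
  proof (cases "u = y")
    case True
    then show ?thesis using assms(2,3) tree_adj_sym[OF assms(3)] by blast
  next
    case False
    then show ?thesis using that domain_connected[OF assms(1)] assms(2) mono by blast
  qed
  then have "induced_connected d (insert y D)"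
    unfolding induced_connected_def by (meson rtrancl_trans)
  moreover have "tree_vert d y" using assms(3) unfolding tree_adj_def by blast
  ultimately show ?thesis using assms(1) unfolding domain_def by blast
qed

definition leafy_domain :: "nat \<Rightarrow> nat list set \<Rightarrow> nat list \<Rightarrow> bool" where
  "leafy_domain d D a \<longleftrightarrow>
     domain d D \<and> a \<in> boundary d D \<and> (\<forall>x \<in> boundary d D - {a}. degD d D x = 1)"

lemma tau_leafy_domain:
  assumes "leafy_domain d D a"
  shows "tau d D \<le> int d - 2"
proof -
  have dom: "domain d D" and a: "a \<in> boundary d D"
    and leaves: "\<forall>x \<in> boundary d D - {a}. degD d D x = 1"
    using assms unfolding leafy_domain_def by auto
  have fin: "finite (boundary d D)"
    using domain_finite[OF dom] unfolding boundary_def by simp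
  have "tau d D = int (degD d D a) - 1 + (\<Sum>x\<in>boundary d D - {a}. int (degD d D x) - 1)"
    unfolding tau_def using sum.remove[OF fin a] by simp
  also have "(\<Sum>x\<in>boundary d D - {a}. int (degD d D x) - 1) = 0"
    using leaves by (intro sum.neutral) simp
  finally have "tau d D = int (degD d D a) - 1" by simp
  moreover have "degD d D a < d" using a unfolding boundary_def by simp
  ultimately show ?thesis by linarith
qed

lemma leafy_domain_root:
  assumes "d \<ge> 1"
  shows "leafy_domain d {[]} []"
proof -
  have "domain d {[]}"
    unfolding domain_def induced_connected_def by (simp add: tree_vert_def)
  moreover have "[] \<in> boundary d {[]}"
    using assms unfolding boundary_def degD_def by (simp add: Collect_conv_if tree_adj_irrefl)
  moreover have "boundary d {[]} - {[]} = {}"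
    unfolding boundary_def by blast
  ultimately show ?thesis unfolding leafy_domain_def by blast
qed

lemma leafy_domain_extend:
  assumes "d \<ge> 2" "leafy_domain d D a"
  shows "\<exists>D' a'. leafy_domain d D' a' \<and> card D' = Suc (card D)"
proof -
  have dom: "domain d D" and a_bd: "a \<in> boundary d D"
    and leaves: "\<forall>x \<in> boundary d D - {a}. degD d D x = 1"
    using assms(2) unfolding leafy_domain_def by auto
  have a: "a \<in> D" "degD d D a < d" using a_bd unfolding boundary_def by auto
  have fin: "finite D" using domain_finite[OF dom] .
  have "\<not> {y. tree_adj d a y} \<subseteq> D"
  proof
    assume "{y. tree_adj d a y} \<subseteq> D"
    then have "{y \<in> D. tree_adj d a y} = {y. tree_adj d a y}" by blast
    with a(2) card_tree_neighbours(2)[OF domain_tree_vert[OF dom a(1)]] show False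
      unfolding degD_def by simp
  qed
  then obtain y where ay: "tree_adj d a y" and y: "y \<notin> D" by blast
  let ?D' = "insert y D"
  have only_a: "x = a" if "x \<in> D" "tree_adj d x y" for x
    using domain_unique_neighbour[OF dom y a(1) that(1) ay that(2)] .
  have deg_old: "degD d ?D' x = degD d D x" if "x \<in> D" "x \<noteq> a" for x
    using degD_insert[OF fin y, of d x] only_a[OF that(1)] that(2) by auto
  have "{z \<in> D. tree_adj d y z} = {a}"
    using only_a tree_adj_sym[of d y] tree_adj_sym[OF ay] a(1) by blast
  then have deg_y: "degD d ?D' y = 1"
    using degD_insert[OF fin y, of d y] tree_adj_irrefl[of d y] unfolding degD_def by simp
  have old_leaves: "degD d ?D' x = 1" if "x \<in> boundary d ?D' - {a, y}" for x
  proof -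
    from that have x: "x \<in> D" "x \<noteq> a" "degD d ?D' x < d" unfolding boundary_def by auto
    then have "x \<in> boundary d D - {a}" using deg_old unfolding boundary_def by simp
    then show ?thesis using leaves deg_old[OF x(1,2)] by simp
  qed
  have dom': "domain d ?D'" using domain_insert_neighbour[OF dom a(1) ay] .
  have "leafy_domain d ?D' (if a \<in> boundary d ?D' then a else y)"
  proof (cases "a \<in> boundary d ?D'")
    case True
    then show ?thesis using dom' old_leaves deg_y unfolding leafy_domain_def by auto
  next
    case False
    moreover have "y \<in> boundary d ?D'" using deg_y assms(1) unfolding boundary_def by simp
    ultimately show ?thesis using dom' old_leaves unfolding leafy_domain_def by auto
  qed
  moreover have "card ?D' = Suc (card D)" using fin y by simp
  ultimately show ?thesis by blast
qed

lemma exists_leafy_domain: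
  assumes "d \<ge> 2" "k \<ge> 1"
  shows "\<exists>D a. leafy_domain d D a \<and> card D = k"
  using assms(2)
proof (induction k rule: nat_induct_at_least)
  case base
  show ?case using leafy_domain_root[of d] assms(1) by force
next
  case (Suc k)
  then show ?case using leafy_domain_extend[OF assms(1)] by blast
qed

lemma finite_boundary_cards: "finite {card (boundary d D) | D. domain d D \<and> card D = k}"
proof (rule finite_subset)
  show "{card (boundary d D) | D. domain d D \<and> card D = k} \<subseteq> {..k}"
  proof
    fix b assume "b \<in> {card (boundary d D) | D. domain d D \<and> card D = k}"
    then obtain D where D: "b = card (boundary d D)" "domain d D" "card D = k" by blast
    have "card (boundary d D) \<le> card D"
      using domain_finite[OF D(2)] by (intro card_mono) (auto simp: boundary_def)
    with D show "b \<in> {..k}" by simp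
  qed
qed simp

lemma isoI_le: "domain d D \<Longrightarrow> isoI d (card D) \<le> card (boundary d D)"
  unfolding isoI_def by (rule Min_le[OF finite_boundary_cards]) blast

lemma isoI_attained:
  assumes "domain d D"
  obtains D' where "domain d D'" "card D' = card D" "card (boundary d D') = isoI d (card D)"
proof -
  have "isoI d (card D) \<in> {card (boundary d D') | D'. domain d D' \<and> card D' = card D}"
    unfolding isoI_def using assms by (intro Min_in[OF finite_boundary_cards]) blast
  then obtain D' where "domain d D'" "card D' = card D" "isoI d (card D) = card (boundary d D')"
    by auto
  with that show thesis by simp
qed

lemma boundary_card_diff:
  assumes "domain d D" "domain d D'" "card D' = card D"
  shows "(int d - 1) * (int (card (boundary d D)) - int (card (boundary d D'))) = tau d D - tau d D'"
  using boundary_card_identity[OF assms(1)] boundary_card_identity[OF assms(2)] assms(3)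
  by (simp add: algebra_simps)

theorem mainTheorem8:
  fixes d :: nat and D :: "nat list set"
  assumes "d \<ge> 2" and "domain d D" and "card D \<ge> 2"
  shows "card (boundary d D) = isoI d (card D) \<longleftrightarrow> tau d D \<le> int d - 2"
proof
  assume optimal: "card (boundary d D) = isoI d (card D)"
  obtain D' a where D': "leafy_domain d D' a" "card D' = card D"
    using exists_leafy_domain[OF assms(1), of "card D"] assms(3) by auto
  then have dom': "domain d D'" unfolding leafy_domain_def by simp
  have "card (boundary d D) \<le> card (boundary d D')"
    using optimal isoI_le[OF dom'] D'(2) by simp
  then have "(int d - 1) * (int (card (boundary d D)) - int (card (boundary d D'))) \<le> 0"
    using assms(1) by (intro mult_nonneg_nonpos) simp_all
  then show "tau d D \<le> int d - 2"
    using boundary_card_diff[OF assms(2) dom' D'(2)] tau_leafy_domain[OF D'(1)] by simp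
next
  assume tau: "tau d D \<le> int d - 2"
  obtain D' where D': "domain d D'" "card D' = card D"
    and optimal: "card (boundary d D') = isoI d (card D)"
    using isoI_attained[OF assms(2)] .
  have "(int d - 1) * (int (card (boundary d D)) - int (card (boundary d D'))) < (int d - 1) * 1"
    using boundary_card_diff[OF assms(2) D'] tau_nonneg[OF D'(1)] D'(2) assms(3) tau by simp
  then have "card (boundary d D) \<le> card (boundary d D')"
    using assms(1) by (simp add: mult_less_cancel_left)
  then show "card (boundary d D) = isoI d (card D)"
    using isoI_le[OF assms(2)] optimal by simp
qed

end
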